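(* Let $U\in\mathbb{R}^{d\times n}$ be a frame, $z\in\mathbb{R}^n_{++}$, $T\subseteq[n]$, and $h:=h^{U,z}_T$. Then for any $1\le\alpha\le\alpha'$, \[\frac{\alpha}{\alpha'}(\alpha'-\alpha)h'(\alpha)\le h(\alpha')-h(\alpha)\le(\alpha'-\alpha)h'(\alpha).\] Equivalently, with the Bregman divergence $D(\beta\mid\alpha):=h'(\alpha)(\beta-\alpha)+h(\alpha)-h(\beta)$, \[0\le D(\alpha'\mid\alpha)\le\Big(\frac{\alpha'}{\alpha}-1\Big)(h(\alpha')-h(\alpha)).\]
   Context: A frame is a full row rank matrix $U\in\mathbb{R}^{d\times n}$; $Z=\mathrm{diag}(z)$; $U_T,Z_T$ restrictions to $T$; $\bar T=[n]\setminus T$. Progress function: $h^{U,z}_T(\alpha):=\mathrm{tr}[\alpha U_TZ_TU_T^{\mathsf T}(U_{\bar T}Z_{\bar T}U_{\bar T}^{\mathsf T}+\alpha U_TZ_TU_T^{\mathsf T})^{-1}]$ for $\alpha>0$. *)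

theory Defs
  imports "HOL-Analysis.Analysis"
begin

text \<open>Diagonal matrix Z_S = diag(z) restricted to the index set S (zero outside S), so that
  U ** restr_diag S z ** transpose U = U_S Z_S U_S^T.\<close>
definition restr_diag :: "'n set \<Rightarrow> real^'n \<Rightarrow> real^'n^'n" where
  "restr_diag S z = (\<chi> i j. if i = j \<and> i \<in> S then z $ i else 0)"

definition frame :: "real^'n^'d \<Rightarrow> bool" where
  "frame U \<longleftrightarrow> rank U = CARD('d)"

definition progress :: "real^'n^'d \<Rightarrow> real^'n \<Rightarrow> 'n set \<Rightarrow> real \<Rightarrow> real" where
  "progress U z T \<alpha> =
     trace ((\<alpha> *\<^sub>R (U ** restr_diag T z ** transpose U)) **
            matrix_inv (U ** restr_diag (- T) z ** transpose U
                        + \<alpha> *\<^sub>R (U ** restr_diag T z ** transpose U)))"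

end

theory Submission
  imports Defs
begin

text \<open>Split the frame operator as A + \<alpha> B, where A and B collect the columns outside and
  inside T, and let R(\<alpha>) be the inverse of A + \<alpha> B. Then h(\<alpha>) = d - tr(A R(\<alpha>)), and the
  resolvent identity R(\<beta>) - R(\<gamma>) = (\<gamma> - \<beta>) R(\<beta>) B R(\<gamma>) gives h'(\<alpha>) = tr(A R B R) and
  h(\<gamma>) = h(\<beta>) + (\<gamma> - \<beta>) h'(\<beta>) - (\<gamma> - \<beta>)^2 tr(A R(\<beta>) B R(\<gamma>) B R(\<beta>)),
  where the last trace is nonnegative, being tr(A X^T R(\<gamma>) X) with X = B R(\<beta>) and A, R(\<gamma>)
  positive semidefinite. So h lies below its tangents, which is the upper bound.
  Exchanging A and B turns h(\<alpha>) into d - h(1/\<alpha>), so the same argument shows that h is convex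
  as a function of 1/\<alpha>; its tangent inequality in the variable 1/\<alpha> is the lower bound.
  Both bounds hold for all \<alpha>, \<alpha>' > 0.\<close>

lemma matrix_diff_ldistrib: "(X::'a::ring_1^'n^'m) ** (Y - Z) = X ** Y - X ** Z"
  by (vector matrix_matrix_mult_def sum_subtractf right_diff_distrib)

lemma matrix_diff_rdistrib: "((X::'a::ring_1^'n^'m) - Y) ** Z = X ** Z - Y ** Z"
  by (vector matrix_matrix_mult_def sum_subtractf left_diff_distrib)

lemma matrix_mult_scaleR_left: "(c *\<^sub>R X) ** Y = c *\<^sub>R ((X::real^'n^'m) ** Y)"
  by (simp add: scalar_matrix_assoc)

lemma matrix_mult_scaleR_right: "X ** (c *\<^sub>R Y) = c *\<^sub>R ((X::real^'n^'m) ** Y)"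
  by (simp add: matrix_scalar_ac scalar_matrix_assoc)

lemma trace_scaleR: "trace (c *\<^sub>R (X::real^'n^'n)) = c * trace X"
  by (simp add: trace_def sum_distrib_left)

lemma matrix_inv_unique:
  fixes M X :: "'a::field^'n^'n"
  assumes "M ** X = mat 1"
  shows "matrix_inv M = X"
proof -
  have "X ** M = mat 1" using assms matrix_left_right_inverse by blast
  then have "M ** matrix_inv M = mat 1" "matrix_inv M ** M = mat 1"
    using assms unfolding matrix_inv_def by (metis (mono_tags, lifting) someI)+
  then show ?thesis
    by (metis assms matrix_mul_assoc matrix_mul_lid)
qed

lemma matrix_inv_right:
  fixes M :: "'a::field^'n^'n"
  assumes "invertible M"
  shows "M ** matrix_inv M = mat 1"
  using assms matrix_inv_unique unfolding invertible_def by metis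

lemma matrix_inv_left:
  fixes M :: "'a::field^'n^'n"
  assumes "invertible M"
  shows "matrix_inv M ** M = mat 1"
  using matrix_inv_right[OF assms] matrix_left_right_inverse by blast

lemma matrix_inv_entry:
  fixes M :: "real^'n^'n"
  assumes "invertible M"
  shows "matrix_inv M $ k $ j = det (\<chi> i l. if l = k then axis j 1 $ i else M $ i $ l) / det M"
proof -
  have "M *v column j (matrix_inv M) = column j (M ** matrix_inv M)"
    by (simp add: column_def matrix_vector_mult_def matrix_matrix_mult_def vec_eq_iff)
  also have "\<dots> = axis j 1"
    by (simp add: matrix_inv_right[OF assms] column_def mat_def axis_def vec_eq_iff)
  finally have "column j (matrix_inv M)
      = (\<chi> k. det (\<chi> i l. if l = k then axis j 1 $ i else M $ i $ l) / det M)"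
    using cramer assms invertible_det_nz by blast
  then show ?thesis
    by (simp add: column_def vec_eq_iff)
qed

lemma isCont_det:
  fixes f :: "'a::t2_space \<Rightarrow> real^'n^'n"
  assumes "\<And>i j. isCont (\<lambda>x. f x $ i $ j) a"
  shows "isCont (\<lambda>x. det (f x)) a"
  unfolding det_def by (intro continuous_intros assms)

lemma isCont_matrix_inv:
  fixes M :: "real^'n^'n"
  assumes "invertible M"
  shows "isCont matrix_inv M"
proof -
  define cramer_inv :: "real^'n^'n \<Rightarrow> real^'n^'n" where
    "cramer_inv X =
       (\<chi> k j. det (\<chi> i l. if l = k then axis j 1 $ i else X $ i $ l) / det X)" for X
  have "continuous_on UNIV (det :: real^'n^'n \<Rightarrow> real)"
    by (intro continuous_at_imp_continuous_on ballI isCont_det continuous_intros)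
  then have det_open: "open {X :: real^'n^'n. det X \<noteq> 0}"
    by (intro open_Collect_neq continuous_on_const)
  have "\<forall>\<^sub>F X in nhds M. invertible X"
    using eventually_nhds_in_open[OF det_open, of M] assms by (simp add: invertible_det_nz)
  then have "\<forall>\<^sub>F X in nhds M. matrix_inv X = cramer_inv X"
    by eventually_elim (simp add: cramer_inv_def matrix_inv_entry vec_eq_iff)
  moreover have "isCont cramer_inv M"
    using assms unfolding isCont_def cramer_inv_def
    by (intro tendsto_vec_lambda tendsto_divide isCont_det[unfolded isCont_def] continuous_intros)
      (auto simp: invertible_det_nz intro!: tendsto_vec_nth)
  ultimately show ?thesis
    using isCont_cong by blast
qed

lemma isCont_trace_mult: "isCont (\<lambda>X. trace (C ** X)) (X0 :: real^'n^'n)"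
  by (simp add: trace_def matrix_matrix_mult_def)

text \<open>Symmetry is not part of this definition.\<close>

definition psd :: "real^'n^'n \<Rightarrow> bool" where
  "psd M \<longleftrightarrow> (\<forall>w. 0 \<le> w \<bullet> (M *v w))"

lemma inner_vector_matrix_mult: "x \<bullet> (y v* G) = (G *v x) \<bullet> (y :: real^'m)"
  by (metis dot_lmul_matrix inner_commute)

lemma quadratic_form_congruence:
  "w \<bullet> ((transpose G ** M ** G) *v w) = (G *v w) \<bullet> (M *v (G *v (w :: real^'n)))"
  by (simp add: inner_vector_matrix_mult flip: matrix_vector_mul_assoc)

lemma psd_congruence: "psd M \<Longrightarrow> psd (transpose G ** M ** G)"
  by (simp add: psd_def quadratic_form_congruence)

lemma psd_diagonal_nonneg:
  assumes "psd M" shows "0 \<le> M $ i $ i"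
proof -
  have "M $ i $ i = axis i 1 \<bullet> (M *v axis i 1)"
    by (simp add: inner_vec_def matrix_vector_mult_def axis_def if_distrib if_distribR cong: if_cong)
  then show ?thesis
    using assms psd_def by metis
qed

lemma trace_gram_mult_nonneg:
  assumes "psd M" shows "0 \<le> trace (transpose F ** F ** M)"
proof -
  have "trace (transpose F ** F ** M) = trace (transpose (transpose F) ** M ** transpose F)"
    by (metis matrix_mul_assoc trace_mul_sym transpose_transpose)
  also have "\<dots> \<ge> 0"
    unfolding trace_def using psd_diagonal_nonneg[OF psd_congruence[OF assms]] by (rule sum_nonneg)
  finally show ?thesis .
qed

text \<open>A and B are given through Gram factors F and G: then tr(A M) \<ge> 0 for positive
  semidefinite M is elementary, and A + \<beta> B is invertible for \<beta> > 0 exactly when F and G have no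
  common kernel vector.\<close>

locale gram_pencil =
  fixes F :: "real^'d^'k" and G :: "real^'d^'m"
  assumes common_kernel_trivial: "\<And>w. F *v w = 0 \<Longrightarrow> G *v w = 0 \<Longrightarrow> w = 0"
begin

definition A :: "real^'d^'d" where "A = transpose F ** F"
definition B :: "real^'d^'d" where "B = transpose G ** G"

definition pencil :: "real \<Rightarrow> real^'d^'d" where
  "pencil \<beta> = A + \<beta> *\<^sub>R B"

definition resolvent :: "real \<Rightarrow> real^'d^'d" where
  "resolvent \<beta> = matrix_inv (pencil \<beta>)"

definition pencil_progress :: "real \<Rightarrow> real" where
  "pencil_progress \<beta> = trace ((\<beta> *\<^sub>R B) ** resolvent \<beta>)"

definition progress_slope :: "real \<Rightarrow> real" where
  "progress_slope \<beta> = trace (A ** resolvent \<beta> ** B ** resolvent \<beta>)"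

lemma symmetric_B: "transpose B = B"
  by (simp add: B_def matrix_transpose_mul)

lemma trace_A_mult_nonneg: "psd M \<Longrightarrow> 0 \<le> trace (A ** M)"
  unfolding A_def by (rule trace_gram_mult_nonneg)

lemma symmetric_pencil: "transpose (pencil \<beta>) = pencil \<beta>"
  by (simp add: pencil_def A_def B_def transpose_def vec_eq_iff matrix_matrix_mult_def mult.commute)

lemma quadratic_form_pencil:
  "w \<bullet> (pencil \<beta> *v w) = (F *v w) \<bullet> (F *v w) + \<beta> * ((G *v w) \<bullet> (G *v w))"
  by (simp add: pencil_def A_def B_def matrix_vector_mult_add_rdistrib inner_add_right
      inner_vector_matrix_mult flip: scaleR_matrix_vector_assoc matrix_vector_mul_assoc)

lemma psd_pencil: "0 \<le> \<beta> \<Longrightarrow> psd (pencil \<beta>)"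
  by (simp add: psd_def quadratic_form_pencil)

lemma invertible_pencil:
  assumes "0 < \<beta>" shows "invertible (pencil \<beta>)"
proof -
  have "w = 0" if "pencil \<beta> *v w = 0" for w
  proof -
    have "(F *v w) \<bullet> (F *v w) + \<beta> * ((G *v w) \<bullet> (G *v w)) = 0"
      using that by (simp flip: quadratic_form_pencil)
    then have "F *v w = 0" "G *v w = 0"
      using assms by (smt (verit) inner_ge_zero inner_eq_zero_iff mult_pos_pos mult_nonneg_nonneg)+
    then show ?thesis
      by (rule common_kernel_trivial)
  qed
  then show ?thesis
    by (simp add: invertible_left_inverse matrix_left_invertible_ker)
qed

lemma pencil_resolvent: "0 < \<beta> \<Longrightarrow> pencil \<beta> ** resolvent \<beta> = mat 1"
  by (simp add: resolvent_def matrix_inv_right invertible_pencil)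

lemma resolvent_pencil: "0 < \<beta> \<Longrightarrow> resolvent \<beta> ** pencil \<beta> = mat 1"
  by (simp add: resolvent_def matrix_inv_left invertible_pencil)

lemma symmetric_resolvent:
  assumes "0 < \<beta>" shows "transpose (resolvent \<beta>) = resolvent \<beta>"
proof -
  have "pencil \<beta> ** transpose (resolvent \<beta>) = mat 1"
    by (metis assms matrix_transpose_mul resolvent_pencil symmetric_pencil transpose_mat)
  then show ?thesis
    unfolding resolvent_def by (rule matrix_inv_unique[symmetric])
qed

lemma psd_resolvent:
  assumes "0 < \<beta>" shows "psd (resolvent \<beta>)"
proof -
  have "psd (transpose (resolvent \<beta>) ** pencil \<beta> ** resolvent \<beta>)"
    using assms by (simp add: psd_congruence psd_pencil)
  then show ?thesis
    using assms by (simp add: symmetric_resolvent resolvent_pencil)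
qed

lemma resolvent_identity:
  assumes "0 < \<beta>" "0 < \<gamma>"
  shows "resolvent \<beta> - resolvent \<gamma> = (\<gamma> - \<beta>) *\<^sub>R (resolvent \<beta> ** B ** resolvent \<gamma>)"
    and "resolvent \<beta> - resolvent \<gamma> = (\<gamma> - \<beta>) *\<^sub>R (resolvent \<gamma> ** B ** resolvent \<beta>)"
proof -
  have pencil_diff: "pencil \<gamma> - pencil \<beta> = (\<gamma> - \<beta>) *\<^sub>R B"
    by (simp add: pencil_def scaleR_diff_left)
  have "resolvent \<beta> - resolvent \<gamma>
      = resolvent \<beta> ** (pencil \<gamma> ** resolvent \<gamma>) - (resolvent \<beta> ** pencil \<beta>) ** resolvent \<gamma>"
    using assms by (simp add: pencil_resolvent resolvent_pencil)
  also have "\<dots> = resolvent \<beta> ** (pencil \<gamma> - pencil \<beta>) ** resolvent \<gamma>"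
    by (simp add: matrix_diff_ldistrib matrix_diff_rdistrib matrix_mul_assoc)
  finally show "resolvent \<beta> - resolvent \<gamma> = (\<gamma> - \<beta>) *\<^sub>R (resolvent \<beta> ** B ** resolvent \<gamma>)"
    by (simp add: pencil_diff matrix_mult_scaleR_left matrix_mult_scaleR_right)
  have "resolvent \<beta> - resolvent \<gamma>
      = (resolvent \<gamma> ** pencil \<gamma>) ** resolvent \<beta> - resolvent \<gamma> ** (pencil \<beta> ** resolvent \<beta>)"
    using assms by (simp add: pencil_resolvent resolvent_pencil)
  also have "\<dots> = resolvent \<gamma> ** (pencil \<gamma> - pencil \<beta>) ** resolvent \<beta>"
    by (simp add: matrix_diff_ldistrib matrix_diff_rdistrib matrix_mul_assoc)
  finally show "resolvent \<beta> - resolvent \<gamma> = (\<gamma> - \<beta>) *\<^sub>R (resolvent \<gamma> ** B ** resolvent \<beta>)"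
    by (simp add: pencil_diff matrix_mult_scaleR_left matrix_mult_scaleR_right)
qed

lemma pencil_progress_eq:
  assumes "0 < \<beta>" shows "pencil_progress \<beta> = CARD('d) - trace (A ** resolvent \<beta>)"
proof -
  have "pencil_progress \<beta> = trace ((pencil \<beta> - A) ** resolvent \<beta>)"
    by (simp add: pencil_progress_def pencil_def)
  then show ?thesis
    using assms by (simp add: matrix_diff_rdistrib pencil_resolvent trace_sub trace_I)
qed

lemma pencil_progress_diff:
  assumes "0 < \<beta>" "0 < \<gamma>"
  shows "pencil_progress \<gamma> - pencil_progress \<beta>
           = (\<gamma> - \<beta>) * trace (A ** resolvent \<beta> ** B ** resolvent \<gamma>)"
proof -
  have "pencil_progress \<gamma> - pencil_progress \<beta> = trace (A ** (resolvent \<beta> - resolvent \<gamma>))"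
    using assms by (simp add: pencil_progress_eq matrix_diff_ldistrib trace_sub)
  then show ?thesis
    using assms
    by (simp add: resolvent_identity(1) matrix_mult_scaleR_right trace_scaleR matrix_mul_assoc)
qed

lemma pencil_progress_le_tangent:
  assumes "0 < \<beta>" "0 < \<gamma>"
  shows "pencil_progress \<gamma> \<le> pencil_progress \<beta> + (\<gamma> - \<beta>) * progress_slope \<beta>"
proof -
  define e where "e = trace (A ** (resolvent \<beta> ** B ** resolvent \<gamma> ** B ** resolvent \<beta>))"
  have "progress_slope \<beta> - trace (A ** resolvent \<beta> ** B ** resolvent \<gamma>)
      = trace (A ** resolvent \<beta> ** B ** (resolvent \<beta> - resolvent \<gamma>))"
    by (simp add: progress_slope_def matrix_diff_ldistrib trace_sub)
  also have "\<dots> = (\<gamma> - \<beta>) * e"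
    using assms by (simp add: e_def resolvent_identity(2) matrix_mult_scaleR_right trace_scaleR
        matrix_mul_assoc)
  finally have slope_diff: "progress_slope \<beta> - trace (A ** resolvent \<beta> ** B ** resolvent \<gamma>)
      = (\<gamma> - \<beta>) * e" .
  have "resolvent \<beta> ** B ** resolvent \<gamma> ** B ** resolvent \<beta>
      = transpose (B ** resolvent \<beta>) ** resolvent \<gamma> ** (B ** resolvent \<beta>)"
    using assms by (simp add: matrix_transpose_mul symmetric_B symmetric_resolvent matrix_mul_assoc)
  then have "0 \<le> e"
    unfolding e_def using assms by (simp add: trace_A_mult_nonneg psd_congruence psd_resolvent)
  then have "0 \<le> (\<gamma> - \<beta>) * ((\<gamma> - \<beta>) * e)"
    by (metis mult_nonneg_nonneg mult.assoc zero_le_square)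
  moreover have "pencil_progress \<gamma> - pencil_progress \<beta>
      = (\<gamma> - \<beta>) * (progress_slope \<beta> - (\<gamma> - \<beta>) * e)"
    using pencil_progress_diff[OF assms] by (simp add: slope_diff[symmetric])
  ultimately show ?thesis
    by (simp add: right_diff_distrib)
qed

lemma isCont_resolvent:
  assumes "0 < \<beta>" shows "isCont resolvent \<beta>"
proof -
  have "isCont pencil \<beta>"
    unfolding pencil_def[abs_def] by (intro continuous_intros)
  moreover have "isCont matrix_inv (pencil \<beta>)"
    using assms by (intro isCont_matrix_inv invertible_pencil)
  ultimately show ?thesis
    unfolding resolvent_def[abs_def] by (rule isCont_o2)
qed

lemma pencil_progress_has_derivative:
  assumes "0 < \<beta>"
  shows "(pencil_progress has_real_derivative progress_slope \<beta>) (at \<beta>)"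
proof -
  define q where "q \<gamma> = trace (A ** resolvent \<beta> ** B ** resolvent \<gamma>)" for \<gamma>
  have "isCont q \<beta>"
    unfolding q_def by (rule isCont_o2[OF isCont_resolvent[OF assms] isCont_trace_mult])
  then have "(q \<longlongrightarrow> progress_slope \<beta>) (at \<beta>)"
    by (simp add: isCont_def q_def progress_slope_def)
  moreover have "\<forall>\<^sub>F \<gamma> in at \<beta>. q \<gamma> = (pencil_progress \<gamma> - pencil_progress \<beta>) / (\<gamma> - \<beta>)"
  proof -
    have "\<forall>\<^sub>F \<gamma> in at \<beta>. 0 < \<gamma>"
      using eventually_at_in_open'[of "{0<..}" \<beta>] assms by simp
    with eventually_neq_at_within[of \<beta> \<beta>] show ?thesis
      by eventually_elim (simp add: q_def pencil_progress_diff assms)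
  qed
  ultimately show ?thesis
    unfolding has_field_derivative_iff by (rule Lim_transform_eventually)
qed

lemma gram_pencil_swap: "gram_pencil G F"
  by unfold_locales (simp add: common_kernel_trivial)

lemma swap_resolvent:
  assumes "0 < \<beta>"
  shows "gram_pencil.resolvent G F (1 / \<beta>) = \<beta> *\<^sub>R resolvent \<beta>"
proof -
  interpret swap: gram_pencil G F by (rule gram_pencil_swap)
  have "swap.pencil (1 / \<beta>) = (1 / \<beta>) *\<^sub>R pencil \<beta>"
    using assms by (simp add: swap.pencil_def pencil_def swap.A_def swap.B_def A_def B_def
        scaleR_add_right add.commute)
  then have "swap.pencil (1 / \<beta>) ** (\<beta> *\<^sub>R resolvent \<beta>) = mat 1"
    using assms by (simp add: matrix_mult_scaleR_left matrix_mult_scaleR_right pencil_resolvent)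
  then show ?thesis
    unfolding swap.resolvent_def by (rule matrix_inv_unique)
qed

lemma swap_pencil_progress:
  assumes "0 < \<beta>"
  shows "gram_pencil.pencil_progress G F (1 / \<beta>) = CARD('d) - pencil_progress \<beta>"
proof -
  interpret swap: gram_pencil G F by (rule gram_pencil_swap)
  have "pencil_progress \<beta> = \<beta> * trace (B ** resolvent \<beta>)"
    by (simp add: pencil_progress_def matrix_mult_scaleR_left trace_scaleR)
  then show ?thesis
    using assms by (simp add: swap.pencil_progress_eq swap_resolvent swap.A_def B_def
        matrix_mult_scaleR_right trace_scaleR)
qed

lemma swap_progress_slope:
  assumes "0 < \<beta>"
  shows "gram_pencil.progress_slope G F (1 / \<beta>) = \<beta>\<^sup>2 * progress_slope \<beta>"
proof -
  interpret swap: gram_pencil G F by (rule gram_pencil_swap)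
  have "trace (B ** resolvent \<beta> ** A ** resolvent \<beta>) = progress_slope \<beta>"
    unfolding progress_slope_def by (metis matrix_mul_assoc trace_mul_sym)
  then show ?thesis
    using assms
    by (simp add: swap.progress_slope_def swap_resolvent swap.A_def swap.B_def A_def B_def
        matrix_mult_scaleR_left matrix_mult_scaleR_right trace_scaleR power2_eq_square)
qed

lemma pencil_progress_ge_tangent_reciprocal:
  assumes "0 < \<beta>" "0 < \<gamma>"
  shows "pencil_progress \<beta> + \<beta> / \<gamma> * (\<gamma> - \<beta>) * progress_slope \<beta> \<le> pencil_progress \<gamma>"
proof -
  interpret swap: gram_pencil G F by (rule gram_pencil_swap)
  have "swap.pencil_progress (1 / \<gamma>)
      \<le> swap.pencil_progress (1 / \<beta>) + (1 / \<gamma> - 1 / \<beta>) * swap.progress_slope (1 / \<beta>)"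
    using assms by (intro swap.pencil_progress_le_tangent) auto
  moreover have "(1 / \<gamma> - 1 / \<beta>) * \<beta>\<^sup>2 = - (\<beta> / \<gamma> * (\<gamma> - \<beta>))"
    using assms by (simp add: field_simps power2_eq_square)
  ultimately show ?thesis
    using assms by (simp add: swap_pencil_progress swap_progress_slope mult.assoc[symmetric])
qed

end

lemma restr_diag_mult_vec_nth: "i \<in> S \<Longrightarrow> (restr_diag S a *v v) $ i = a $ i * v $ i"
  by (simp add: restr_diag_def matrix_vector_mult_def if_distrib if_distribR cong: if_cong)

lemma transpose_restr_diag: "transpose (restr_diag S a) = restr_diag S a"
  by (auto simp: restr_diag_def transpose_def vec_eq_iff)

lemma restr_diag_mult: "restr_diag S a ** restr_diag S b = restr_diag S (\<chi> i. a $ i * b $ i)"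
proof -
  have "(if i = k \<and> i \<in> S then a $ i else 0) * (if k = j \<and> k \<in> S then b $ k else 0)
      = (if k = i then (if i = j \<and> i \<in> S then a $ i * b $ i else 0) else 0)" for i j k
    by auto
  then show ?thesis
    by (auto simp: restr_diag_def matrix_matrix_mult_def vec_eq_iff)
qed

definition gram_factor :: "real^'n^'d \<Rightarrow> real^'n \<Rightarrow> 'n set \<Rightarrow> real^'d^'n" where
  "gram_factor U z S = restr_diag S (\<chi> i. sqrt (z $ i)) ** transpose U"

lemma restr_diag_gram:
  assumes "\<forall>i\<in>S. 0 \<le> z $ i"
  shows "U ** restr_diag S z ** transpose U = transpose (gram_factor U z S) ** gram_factor U z S"
proof -
  define D where "D = restr_diag S (\<chi> i. sqrt (z $ i))"
  have "transpose D ** D = restr_diag S (\<chi> i. sqrt (z $ i) * sqrt (z $ i))"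
    by (simp add: D_def transpose_restr_diag restr_diag_mult)
  also have "\<dots> = restr_diag S z"
    using assms by (auto simp: restr_diag_def vec_eq_iff)
  moreover have "transpose (D ** transpose U) ** (D ** transpose U)
      = U ** (transpose D ** D) ** transpose U"
    by (simp add: matrix_transpose_mul matrix_mul_assoc)
  ultimately show ?thesis
    by (simp add: D_def gram_factor_def)
qed

lemma frame_transpose_kernel:
  assumes "frame U" "transpose U *v w = 0"
  shows "w = 0"
proof -
  have "inj ((*v) (transpose U))"
    using assms(1) by (simp add: frame_def rank_transpose flip: full_rank_injective)
  then show ?thesis
    using assms(2) by (metis injD matrix_vector_mult_0_right)
qed

lemma gram_pencil_frame:
  assumes "frame U" "\<forall>i. 0 < z $ i"
  shows "gram_pencil (gram_factor U z (- T)) (gram_factor U z T)"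
proof
  fix w
  assume "gram_factor U z (- T) *v w = 0" and "gram_factor U z T *v w = 0"
  then have outside: "(restr_diag (- T) (\<chi> i. sqrt (z $ i)) *v (transpose U *v w)) $ i = 0"
    and inside: "(restr_diag T (\<chi> i. sqrt (z $ i)) *v (transpose U *v w)) $ i = 0" for i
    by (simp_all add: gram_factor_def flip: matrix_vector_mul_assoc)
  have "sqrt (z $ i) * (transpose U *v w) $ i = 0" for i
    using outside[of i] inside[of i] by (cases "i \<in> T") (simp_all add: restr_diag_mult_vec_nth)
  then have "transpose U *v w = 0"
    using assms(2) by (simp add: vec_eq_iff) (metis less_irrefl)
  then show "w = 0"
    by (rule frame_transpose_kernel[OF assms(1)])
qed

lemma progress_eq_pencil_progress:
  assumes "frame U" "\<forall>i. 0 < z $ i"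
  shows "progress U z T = gram_pencil.pencil_progress (gram_factor U z (- T)) (gram_factor U z T)"
proof -
  interpret gram_pencil "gram_factor U z (- T)" "gram_factor U z T"
    using assms by (rule gram_pencil_frame)
  have "U ** restr_diag S z ** transpose U = transpose (gram_factor U z S) ** gram_factor U z S" for S
    using assms(2) by (simp add: restr_diag_gram less_imp_le)
  then show ?thesis
    by (simp add: fun_eq_iff progress_def pencil_progress_def resolvent_def pencil_def A_def B_def)
qed

theorem claim2p18:
  fixes U :: "real^'n^'d" and z :: "real^'n" and T :: "'n set" and \<alpha> \<alpha>' :: real
  assumes "frame U"
    and "\<forall>i. z $ i > 0"
    and "1 \<le> \<alpha>" and "\<alpha> \<le> \<alpha>'"
  defines "h \<equiv> progress U z T"
  shows "(\<alpha> / \<alpha>') * (\<alpha>' - \<alpha>) * deriv h \<alpha> \<le> h \<alpha>' - h \<alpha>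
         \<and> h \<alpha>' - h \<alpha> \<le> (\<alpha>' - \<alpha>) * deriv h \<alpha>"
proof -
  interpret gram_pencil "gram_factor U z (- T)" "gram_factor U z T"
    using assms(1,2) by (rule gram_pencil_frame)
  have h_eq: "h = pencil_progress"
    unfolding h_def using assms(1,2) by (rule progress_eq_pencil_progress)
  have pos: "0 < \<alpha>" "0 < \<alpha>'"
    using assms(3,4) by auto
  have "deriv h \<alpha> = progress_slope \<alpha>"
    unfolding h_eq by (rule DERIV_imp_deriv[OF pencil_progress_has_derivative[OF pos(1)]])
  then show ?thesis
    using pencil_progress_le_tangent[OF pos] pencil_progress_ge_tangent_reciprocal[OF pos]
    by (simp add: h_eq algebra_simps)
qed

end
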